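(* Let $\alpha\in\mathbb{R}$, $\beta\in(0,1)$ and $\sigma\in\mathbb{R}\setminus\{0,1\}$. Let $J\subset(0,\infty)$ be an open interval such that $1+\alpha\sigma q>0$ and $|\alpha\sigma q|<1$ for all $q\in J$. Let $u:J\to\mathbb{R}$ be twice differentiable with $u'(q)>0$ for all $q\in J$. Then $u$ has linear fractional relative risk aversion on $J$, i.e. $$-\frac{q\,u''(q)}{u'(q)}=\frac{\alpha q+\beta}{\alpha\sigma q+1}\quad\text{for all } q\in J,$$ if and only if there exist constants $K>0$ and $C\in\mathbb{R}$ such that for all $q\in J$ $$u(q)=\frac{K\sigma}{\sigma-1}\,(1+\alpha\sigma q)^{\beta-\frac{1}{\sigma}}\,q^{1-\beta}\left[1+\frac{\beta-\frac{1}{\sigma}}{1-\beta}\;{}_2F_1\!\left(1-\tfrac{1}{\sigma},\,1;\,2-\beta;\,-\alpha\sigma q\right)\right]+C .$$ In this case $u'(q)=K(1+\alpha\sigma q)^{\beta-\frac1\sigma}q^{-\beta}$.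
   Context: ${}_2F_1(a,b;c;z)=\sum_{n=0}^\infty\frac{(a)_n(b)_n}{(c)_n}\frac{z^n}{n!}$ for $|z|<1$ is the Gauss hypergeometric function, where $(a)_n=a(a+1)\cdots(a+n-1)$, $(a)_0=1$, is the rising Pochhammer symbol. All real powers of positive reals are the real (principal) ones. *)

theory Defs
  imports "HOL-Analysis.Analysis"
begin

text \<open>Gauss hypergeometric function 2F1(a,b;c;z) as its power series (meant for |z| < 1).\<close>
definition hyp2F1 :: "real \<Rightarrow> real \<Rightarrow> real \<Rightarrow> real \<Rightarrow> real" where
  "hyp2F1 a b c z = (\<Sum>n. pochhammer a n * pochhammer b n / pochhammer c n * z ^ n / fact n)"

end

(*
  The condition says u''/u' = -(alpha q + beta) / (q (1 + alpha sigma q)), which is the logarithmic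
  derivative of m q = (1 + alpha sigma q) powr (beta - 1/sigma) * q powr (-beta); on the interval J
  this holds iff u' = K m. The hypergeometric expression (lfrra_utility; LFRRA = linear fractional
  relative risk aversion) is an antiderivative of m: differentiating it, the hypergeometric terms
  cancel because H = 2F1(a,1;c;z) solves the first-order equation
  z (1 - z) H' + (c - 1 - a z) H = c - 1, which is the coefficient recurrence
  (c + n) h (n + 1) = (a + n) h n of its power series summed against z powers.
*)
theory Submission
  imports Defs
begin

lemma proportional_iff_same_log_derivative:
  fixes f f' g r :: "real \<Rightarrow> real"
  assumes J: "open J" "is_interval J"
    and f: "\<And>x. x \<in> J \<Longrightarrow> (f has_real_derivative f' x) (at x)"
    and g: "\<And>x. x \<in> J \<Longrightarrow> (g has_real_derivative g x * r x) (at x)"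
    and g_nonzero: "\<And>x. x \<in> J \<Longrightarrow> g x \<noteq> 0"
  shows "(\<forall>x\<in>J. f' x = f x * r x) \<longleftrightarrow> (\<exists>K. \<forall>x\<in>J. f x = K * g x)"
proof
  assume f': "\<forall>x\<in>J. f' x = f x * r x"
  have "\<exists>K. \<forall>x\<in>J. f x / g x = K"
  proof (rule has_field_derivative_zero_constant)
    show "convex J"
      using J(2) by (rule is_interval_convex)
    fix x assume x: "x \<in> J"
    have "((\<lambda>x. f x / g x) has_real_derivative (f' x * g x - f x * (g x * r x)) / (g x * g x)) (at x)"
      using f[OF x] g[OF x] g_nonzero[OF x] by (rule DERIV_divide)
    with f' x show "((\<lambda>x. f x / g x) has_real_derivative 0) (at x within J)"
      by (simp add: has_field_derivative_at_within)
  qed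
  with g_nonzero show "\<exists>K. \<forall>x\<in>J. f x = K * g x"
    by (metis nonzero_eq_divide_eq mult.commute)
next
  assume "\<exists>K. \<forall>x\<in>J. f x = K * g x"
  then obtain K where K: "\<forall>x\<in>J. f x = K * g x" ..
  show "\<forall>x\<in>J. f' x = f x * r x"
  proof
    fix x assume x: "x \<in> J"
    have "(f has_real_derivative K * (g x * r x)) (at x)"
      using DERIV_cmult[OF g[OF x], of K] J(1) x
      by (rule has_field_derivative_transform_within_open) (use K in simp)
    with f[OF x] K x show "f' x = f x * r x"
      by (metis DERIV_unique mult.assoc)
  qed
qed

lemma deriv_eq_iff_eq_antiderivative_plus_const:
  fixes u F \<phi> :: "real \<Rightarrow> real"
  assumes J: "open J" "is_interval J"
    and u: "\<And>x. x \<in> J \<Longrightarrow> u differentiable (at x)"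
    and F: "\<And>x. x \<in> J \<Longrightarrow> (F has_real_derivative \<phi> x) (at x)"
  shows "(\<forall>x\<in>J. deriv u x = \<phi> x) \<longleftrightarrow> (\<exists>C. \<forall>x\<in>J. u x = F x + C)"
proof
  assume u': "\<forall>x\<in>J. deriv u x = \<phi> x"
  have "\<exists>C. \<forall>x\<in>J. u x - F x = C"
  proof (rule has_field_derivative_zero_constant)
    show "convex J"
      using J(2) by (rule is_interval_convex)
    fix x assume x: "x \<in> J"
    have "(u has_real_derivative \<phi> x) (at x)"
      using u[OF x] u' x by (simp add: DERIV_deriv_iff_real_differentiable[symmetric])
    from DERIV_diff[OF this F[OF x]]
    show "((\<lambda>x. u x - F x) has_real_derivative 0) (at x within J)"
      by (simp add: has_field_derivative_at_within)
  qed
  then show "\<exists>C. \<forall>x\<in>J. u x = F x + C"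
    by (metis diff_eq_eq add.commute)
next
  assume "\<exists>C. \<forall>x\<in>J. u x = F x + C"
  then obtain C where C: "\<forall>x\<in>J. u x = F x + C" ..
  show "\<forall>x\<in>J. deriv u x = \<phi> x"
  proof
    fix x assume x: "x \<in> J"
    have "((\<lambda>x. F x + C) has_real_derivative \<phi> x) (at x)"
      using F[OF x] by (auto intro!: derivative_eq_intros)
    then have "(u has_real_derivative \<phi> x) (at x)"
      using J(1) x by (rule has_field_derivative_transform_within_open) (use C in simp)
    then show "deriv u x = \<phi> x"
      by (rule DERIV_imp_deriv)
  qed
qed

lemma proportional_iff_pos_factor:
  fixes f g :: "'a \<Rightarrow> real"
  assumes "\<And>x. x \<in> J \<Longrightarrow> f x > 0" "\<And>x. x \<in> J \<Longrightarrow> g x > 0"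
  shows "(\<exists>K. \<forall>x\<in>J. f x = K * g x) \<longleftrightarrow> (\<exists>K>0. \<forall>x\<in>J. f x = K * g x)"
proof
  assume "\<exists>K. \<forall>x\<in>J. f x = K * g x"
  then obtain K where K: "\<forall>x\<in>J. f x = K * g x" ..
  show "\<exists>K>0. \<forall>x\<in>J. f x = K * g x"
  proof (cases "J = {}")
    case False
    then obtain x where "x \<in> J" by blast
    with K assms have "K > 0"
      by (metis zero_less_mult_pos2)
    with K show ?thesis by blast
  qed (auto intro!: exI[of _ 1])
qed blast

definition hyp2F1_one_coeff :: "real \<Rightarrow> real \<Rightarrow> nat \<Rightarrow> real" where
  "hyp2F1_one_coeff a c n = pochhammer a n / pochhammer c n"

lemma hyp2F1_one_coeff_Suc:
  assumes "c > 0"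
  shows "hyp2F1_one_coeff a c (Suc n) = hyp2F1_one_coeff a c n * (a + n) / (c + n)"
  using pochhammer_pos[OF assms, of n] assms
  by (simp add: hyp2F1_one_coeff_def pochhammer_Suc field_simps)

lemma hyp2F1_one_eq: "hyp2F1 a 1 c z = (\<Sum>n. hyp2F1_one_coeff a c n * z ^ n)"
  unfolding hyp2F1_def hyp2F1_one_coeff_def
  by (simp add: pochhammer_fact[symmetric])

lemma summable_hyp2F1_one:
  assumes c: "c > 0" and z: "\<bar>z\<bar> < 1"
  shows "summable (\<lambda>n. hyp2F1_one_coeff a c n * z ^ n)"
proof -
  define r where "r = (1 + \<bar>z\<bar>) / 2"
  have r: "\<bar>z\<bar> < r" "r < 1" using z by (auto simp: r_def)
  define N where "N = nat \<lceil>\<bar>a\<bar> / (r - \<bar>z\<bar>)\<rceil>"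
  show ?thesis
  proof (rule summable_ratio_test[of r N])
    fix n assume "N \<le> n"
    then have n_large: "\<bar>a\<bar> \<le> real n * (r - \<bar>z\<bar>)"
      using r unfolding N_def by (simp add: field_simps)
    have "\<bar>a + n\<bar> * \<bar>z\<bar> \<le> (\<bar>a\<bar> + n) * \<bar>z\<bar>"
      by (intro mult_right_mono) auto
    also have "\<dots> \<le> \<bar>a\<bar> + n * \<bar>z\<bar>"
      using z by (simp add: algebra_simps mult_left_le)
    also have "\<dots> \<le> r * n"
      using n_large by (simp add: algebra_simps)
    also have "\<dots> \<le> r * (c + n)"
      using r c z by (intro mult_left_mono) auto
    finally have ratio: "\<bar>a + n\<bar> * \<bar>z\<bar> / (c + n) \<le> r"
      using c by (simp add: divide_le_eq add_pos_nonneg mult.commute)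
    have "hyp2F1_one_coeff a c (Suc n) * z ^ Suc n
        = hyp2F1_one_coeff a c n * z ^ n * ((a + n) * z / (c + n))"
      using c by (simp add: hyp2F1_one_coeff_Suc)
    then have "norm (hyp2F1_one_coeff a c (Suc n) * z ^ Suc n)
        = norm (hyp2F1_one_coeff a c n * z ^ n) * (\<bar>a + n\<bar> * \<bar>z\<bar> / (c + n))"
      using c by (simp add: abs_mult abs_divide add_pos_nonneg)
    also have "\<dots> \<le> norm (hyp2F1_one_coeff a c n * z ^ n) * r"
      using ratio by (rule mult_left_mono) simp
    finally show "norm (hyp2F1_one_coeff a c (Suc n) * z ^ Suc n)
        \<le> r * norm (hyp2F1_one_coeff a c n * z ^ n)"
      by (simp add: mult.commute)
  qed (use r in simp)
qed

lemma power_series_first_order_ode: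
  fixes h :: "nat \<Rightarrow> real"
  assumes recurrence: "\<And>n. (c + n) * h (Suc n) = (a + n) * h n" and "h 0 = 1"
    and H: "(\<lambda>n. h n * z ^ n) sums H" and D: "(\<lambda>n. diffs h n * z ^ n) sums D"
  shows "z * (1 - z) * D + (c - 1 - a * z) * H = c - 1"
proof -
  have "(\<lambda>n. (\<lambda>m. m * h m * z ^ m) (Suc n)) sums (z * D)"
    using sums_mult[OF D, of z] by (simp add: diffs_def algebra_simps)
  then have zD: "(\<lambda>n. n * h n * z ^ n) sums (z * D)"
    by (subst (asm) sums_Suc_iff) simp
  define g where "g = (\<lambda>m. (c - 1 + m) * h m * z ^ m)"
  have "g sums ((c - 1) * H + z * D)"
    using sums_add[OF sums_mult[OF H, of "c - 1"] zD] by (simp add: g_def algebra_simps)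
  then have "(\<lambda>n. g (Suc n)) sums ((c - 1) * H + z * D - (c - 1))"
    unfolding sums_Suc_iff by (simp add: g_def \<open>h 0 = 1\<close>)
  moreover have "g (Suc n) = a * z * (h n * z ^ n) + z * (n * h n * z ^ n)" for n
  proof -
    have "g (Suc n) = z * z ^ n * ((c + n) * h (Suc n))"
      by (simp add: g_def algebra_simps)
    also have "\<dots> = z * z ^ n * ((a + n) * h n)"
      by (simp only: recurrence)
    finally show ?thesis
      by (simp add: algebra_simps)
  qed
  then have "(\<lambda>n. g (Suc n)) sums (a * z * H + z * (z * D))"
    using sums_add[OF sums_mult[OF H, of "a * z"] sums_mult[OF zD, of z]] by simp
  ultimately have "(c - 1) * H + z * D - (c - 1) = a * z * H + z * (z * D)"
    by (rule sums_unique2)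
  then show ?thesis
    by (simp add: algebra_simps)
qed

lemma hyp2F1_one_ode:
  assumes c: "c > 0" and z: "\<bar>z\<bar> < 1"
  obtains D where "(hyp2F1 a 1 c has_real_derivative D) (at z)"
    and "z * (1 - z) * D + (c - 1 - a * z) * hyp2F1 a 1 c z = c - 1"
proof
  define h where "h = hyp2F1_one_coeff a c"
  define D where "D = (\<Sum>n. diffs h n * z ^ n)"
  have summable: "summable (\<lambda>n. h n * w ^ n)" if "norm w < 1" for w
    using summable_hyp2F1_one[OF c] that by (simp add: h_def)
  have H_eq: "hyp2F1 a 1 c = (\<lambda>w. \<Sum>n. h n * w ^ n)"
    by (simp add: hyp2F1_one_eq h_def fun_eq_iff)
  show "(hyp2F1 a 1 c has_real_derivative D) (at z)"
    unfolding H_eq D_def by (rule termdiffs_strong'[OF summable]) (use z in auto)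
  show "z * (1 - z) * D + (c - 1 - a * z) * hyp2F1 a 1 c z = c - 1"
  proof (rule power_series_first_order_ode)
    show "(c + n) * h (Suc n) = (a + n) * h n" for n
      using c by (simp add: h_def hyp2F1_one_coeff_Suc add_pos_nonneg)
    show "h 0 = 1"
      by (simp add: h_def hyp2F1_one_coeff_def)
    show "(\<lambda>n. h n * z ^ n) sums hyp2F1 a 1 c z"
      using summable z by (simp add: H_eq summable_sums)
    show "(\<lambda>n. diffs h n * z ^ n) sums D"
      using termdiff_converges[of z 1 h] summable z by (simp add: D_def summable_sums)
  qed
qed

lemma has_real_derivative_hyp2F1_antiderivative:
  fixes \<beta> \<gamma> s q :: real
  assumes \<beta>: "\<beta> < 1" and q: "q > 0" "1 + s * q > 0" "\<bar>s * q\<bar> < 1"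
  shows "((\<lambda>q. (1 + s * q) powr \<gamma> * q powr (1 - \<beta>)
              * (1 + \<gamma> / (1 - \<beta>) * hyp2F1 (1 - \<beta> + \<gamma>) 1 (2 - \<beta>) (- s * q)))
          has_real_derivative (1 - \<beta> + \<gamma>) * (1 + s * q) powr \<gamma> * q powr (- \<beta>)) (at q)"
proof -
  define H where "H = hyp2F1 (1 - \<beta> + \<gamma>) 1 (2 - \<beta>)"
  define k where "k = \<gamma> / (1 - \<beta>)"
  define P where "P = (1 + s * q) powr \<gamma>"
  define Q where "Q = q powr (- \<beta>)"
  obtain D where H': "(H has_real_derivative D) (at (- s * q))"
    and ode: "- s * q * (1 + s * q) * D + (1 - \<beta> + (1 - \<beta> + \<gamma>) * s * q) * H (- s * q) = 1 - \<beta>"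
    using hyp2F1_one_ode[of "2 - \<beta>" "- s * q" "1 - \<beta> + \<gamma>"] \<beta> q
    unfolding H_def by (auto simp: algebra_simps)
  have "((\<lambda>q. H (- s * q)) has_real_derivative D * (- s)) (at q)"
    by (rule DERIV_chain2[where g="\<lambda>q. - s * q", OF H']) (auto intro!: derivative_eq_intros)
  then have dF: "((\<lambda>q. 1 + k * H (- s * q)) has_real_derivative k * (D * (- s))) (at q)"
    by (auto intro!: derivative_eq_intros)
  have dP: "((\<lambda>q. (1 + s * q) powr \<gamma>) has_real_derivative P * (\<gamma> * s / (1 + s * q))) (at q)"
    using q unfolding P_def by (auto intro!: derivative_eq_intros simp: powr_diff)
  have dQ: "((\<lambda>q. q powr (1 - \<beta>)) has_real_derivative (1 - \<beta>) * Q) (at q)"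
    using has_real_derivative_powr[OF q(1), of "1 - \<beta>"] by (simp add: Q_def)
  have derivative: "((\<lambda>q. (1 + s * q) powr \<gamma> * q powr (1 - \<beta>) * (1 + k * H (- s * q)))
      has_real_derivative (P * (\<gamma> * s / (1 + s * q)) * q powr (1 - \<beta>) + (1 - \<beta>) * Q * P)
        * (1 + k * H (- s * q)) + k * (D * (- s)) * (P * q powr (1 - \<beta>))) (at q)"
    using DERIV_mult[OF DERIV_mult[OF dP dQ] dF] by (simp only: P_def)
  have q_powr: "q powr (1 - \<beta>) = q * Q"
    using q by (simp add: Q_def powr_diff powr_minus field_simps)
  have bracket: "(\<gamma> * s * q / (1 + s * q) + (1 - \<beta>)) * (1 + k * H (- s * q)) - k * s * q * D
      = 1 - \<beta> + \<gamma>"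
  proof -
    have "\<gamma> = k * (1 - \<beta>)"
      using \<beta> by (simp add: k_def)
    then have "(\<gamma> * s * q / (1 + s * q) + (1 - \<beta>)) * (1 + k * H (- s * q)) - k * s * q * D
        - (1 - \<beta> + \<gamma>) = k / (1 + s * q)
          * (- s * q * (1 + s * q) * D + (1 - \<beta> + (1 - \<beta> + \<gamma>) * s * q) * H (- s * q) - (1 - \<beta>))"
      using q by (simp add: field_simps)
    with ode show ?thesis
      by simp
  qed
  have "(P * (\<gamma> * s / (1 + s * q)) * q powr (1 - \<beta>) + (1 - \<beta>) * Q * P)
        * (1 + k * H (- s * q)) + k * (D * (- s)) * (P * q powr (1 - \<beta>))
      = P * Q * ((\<gamma> * s * q / (1 + s * q) + (1 - \<beta>)) * (1 + k * H (- s * q)) - k * s * q * D)"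
    unfolding q_powr by (simp add: algebra_simps)
  with derivative bracket show ?thesis
    by (simp add: H_def k_def P_def Q_def mult.commute mult.left_commute)
qed

definition lfrra_marginal_utility :: "real \<Rightarrow> real \<Rightarrow> real \<Rightarrow> real \<Rightarrow> real" where
  "lfrra_marginal_utility \<alpha> \<beta> \<sigma> q = (1 + \<alpha> * \<sigma> * q) powr (\<beta> - 1 / \<sigma>) * q powr (- \<beta>)"

definition lfrra_utility :: "real \<Rightarrow> real \<Rightarrow> real \<Rightarrow> real \<Rightarrow> real" where
  "lfrra_utility \<alpha> \<beta> \<sigma> q = \<sigma> / (\<sigma> - 1) * (1 + \<alpha> * \<sigma> * q) powr (\<beta> - 1 / \<sigma>) * q powr (1 - \<beta>)
     * (1 + (\<beta> - 1 / \<sigma>) / (1 - \<beta>) * hyp2F1 (1 - 1 / \<sigma>) 1 (2 - \<beta>) (- \<alpha> * \<sigma> * q))"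

lemma has_real_derivative_lfrra_utility:
  fixes \<alpha> \<beta> \<sigma> q :: real
  assumes "\<beta> < 1" "\<sigma> \<noteq> 0" "\<sigma> \<noteq> 1" and q: "q > 0" "1 + \<alpha> * \<sigma> * q > 0" "\<bar>\<alpha> * \<sigma> * q\<bar> < 1"
  shows "(lfrra_utility \<alpha> \<beta> \<sigma> has_real_derivative lfrra_marginal_utility \<alpha> \<beta> \<sigma> q) (at q)"
proof -
  have "1 - \<beta> + (\<beta> - 1 / \<sigma>) = (\<sigma> - 1) / \<sigma>"
    using assms(2) by (simp add: field_simps)
  with DERIV_cmult[OF has_real_derivative_hyp2F1_antiderivative[OF assms(1) q], of "\<sigma> / (\<sigma> - 1)" "\<beta> - 1 / \<sigma>"]
  show ?thesis
    using assms(2,3) unfolding lfrra_utility_def lfrra_marginal_utility_def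
    by (simp add: mult.assoc)
qed

lemma has_real_derivative_lfrra_marginal_utility:
  fixes \<alpha> \<beta> \<sigma> q :: real
  assumes "\<sigma> \<noteq> 0" "q > 0" "1 + \<alpha> * \<sigma> * q > 0"
  shows "(lfrra_marginal_utility \<alpha> \<beta> \<sigma> has_real_derivative
      lfrra_marginal_utility \<alpha> \<beta> \<sigma> q * (- (\<alpha> * q + \<beta>) / (q * (1 + \<alpha> * \<sigma> * q)))) (at q)"
proof -
  have generic: "((\<lambda>q. (1 + s * q) powr \<gamma> * q powr (- \<beta>)) has_real_derivative
      (1 + s * q) powr \<gamma> * q powr (- \<beta>) * ((\<gamma> * s * q - \<beta> * (1 + s * q)) / (q * (1 + s * q)))) (at q)"
    if "1 + s * q > 0" for s \<gamma>
    using that assms(2) by (auto intro!: derivative_eq_intros simp: powr_diff field_simps)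
  have numerator: "(\<beta> - 1 / \<sigma>) * (\<alpha> * \<sigma>) * q - \<beta> * (1 + \<alpha> * \<sigma> * q) = - (\<alpha> * q + \<beta>)"
    using assms(1) by (simp add: field_simps)
  from generic[of "\<alpha> * \<sigma>" "\<beta> - 1 / \<sigma>", OF assms(3)] show ?thesis
    unfolding numerator lfrra_marginal_utility_def[abs_def] .
qed

lemma linear_fractional_rra_iff_log_deriv:
  fixes \<alpha> \<beta> \<sigma> q d d2 :: real
  assumes "q > 0" "1 + \<alpha> * \<sigma> * q > 0" "d \<noteq> 0"
  shows "- (q * d2) / d = (\<alpha> * q + \<beta>) / (\<alpha> * \<sigma> * q + 1)
    \<longleftrightarrow> d2 = d * (- (\<alpha> * q + \<beta>) / (q * (1 + \<alpha> * \<sigma> * q)))"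
proof -
  have "\<alpha> * \<sigma> * q + 1 \<noteq> 0" "q * (1 + \<alpha> * \<sigma> * q) \<noteq> 0"
    using assms by auto
  then have "- (q * d2) / d = (\<alpha> * q + \<beta>) / (\<alpha> * \<sigma> * q + 1)
      \<longleftrightarrow> - (q * d2) * (\<alpha> * \<sigma> * q + 1) = (\<alpha> * q + \<beta>) * d"
    using assms(3) by (intro frac_eq_eq)
  also have "\<dots> \<longleftrightarrow> d2 * (q * (1 + \<alpha> * \<sigma> * q)) = - (\<alpha> * q + \<beta>) * d"
    by (auto simp: algebra_simps)
  also have "\<dots> \<longleftrightarrow> d2 = d * (- (\<alpha> * q + \<beta>) / (q * (1 + \<alpha> * \<sigma> * q)))"
    using \<open>q * (1 + \<alpha> * \<sigma> * q) \<noteq> 0\<close> by (simp add: eq_divide_eq mult.commute)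
  finally show ?thesis .
qed

theorem theorem1:
  fixes \<alpha> \<beta> \<sigma> :: real and J :: "real set" and u :: "real \<Rightarrow> real"
  assumes beta: "0 < \<beta>" "\<beta> < 1"
    and sigma: "\<sigma> \<noteq> 0" "\<sigma> \<noteq> 1"
    and J: "open J" "is_interval J" "J \<subseteq> {0<..}"
    and Jcond: "\<forall>q\<in>J. 1 + \<alpha> * \<sigma> * q > 0 \<and> \<bar>\<alpha> * \<sigma> * q\<bar> < 1"
    and diff1: "\<forall>q\<in>J. u differentiable (at q)"
    and diff2: "\<forall>q\<in>J. deriv u differentiable (at q)"
    and pos: "\<forall>q\<in>J. deriv u q > 0"
  shows "((\<forall>q\<in>J. - (q * deriv (deriv u) q) / deriv u q = (\<alpha> * q + \<beta>) / (\<alpha> * \<sigma> * q + 1))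
          \<longleftrightarrow>
          (\<exists>K C. K > 0 \<and> (\<forall>q\<in>J. u q =
              K * \<sigma> / (\<sigma> - 1) * (1 + \<alpha> * \<sigma> * q) powr (\<beta> - 1 / \<sigma>) * q powr (1 - \<beta>)
              * (1 + (\<beta> - 1 / \<sigma>) / (1 - \<beta>) * hyp2F1 (1 - 1 / \<sigma>) 1 (2 - \<beta>) (- \<alpha> * \<sigma> * q)) + C)))
      \<and> (\<forall>K C. K > 0 \<and> (\<forall>q\<in>J. u q =
              K * \<sigma> / (\<sigma> - 1) * (1 + \<alpha> * \<sigma> * q) powr (\<beta> - 1 / \<sigma>) * q powr (1 - \<beta>)
              * (1 + (\<beta> - 1 / \<sigma>) / (1 - \<beta>) * hyp2F1 (1 - 1 / \<sigma>) 1 (2 - \<beta>) (- \<alpha> * \<sigma> * q)) + C)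
            \<longrightarrow> (\<forall>q\<in>J. deriv u q = K * (1 + \<alpha> * \<sigma> * q) powr (\<beta> - 1 / \<sigma>) * q powr (- \<beta>)))"
proof -
  let ?m = "lfrra_marginal_utility \<alpha> \<beta> \<sigma>" and ?U = "lfrra_utility \<alpha> \<beta> \<sigma>"
  have q: "q > 0" "1 + \<alpha> * \<sigma> * q > 0" "\<bar>\<alpha> * \<sigma> * q\<bar> < 1" if "q \<in> J" for q
    using J(3) Jcond that by auto
  have m_pos: "?m q > 0" if "q \<in> J" for q
    using q[OF that] by (simp add: lfrra_marginal_utility_def)
  have u'_iff: "(\<forall>q\<in>J. deriv u q = K * ?m q) \<longleftrightarrow> (\<exists>C. \<forall>q\<in>J. u q = K * ?U q + C)" for K
    using diff1 by (intro deriv_eq_iff_eq_antiderivative_plus_const[OF J(1,2)] DERIV_cmult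
        has_real_derivative_lfrra_utility beta(2) sigma q) auto
  have "(\<forall>q\<in>J. - (q * deriv (deriv u) q) / deriv u q = (\<alpha> * q + \<beta>) / (\<alpha> * \<sigma> * q + 1))
      \<longleftrightarrow> (\<forall>q\<in>J. deriv (deriv u) q = deriv u q * (- (\<alpha> * q + \<beta>) / (q * (1 + \<alpha> * \<sigma> * q))))"
    by (intro ball_cong refl linear_fractional_rra_iff_log_deriv) (use q pos in \<open>auto simp: less_imp_neq\<close>)
  also have "\<dots> \<longleftrightarrow> (\<exists>K. \<forall>q\<in>J. deriv u q = K * ?m q)"
    by (rule proportional_iff_same_log_derivative[OF J(1,2)])
      (use diff2 m_pos q has_real_derivative_lfrra_marginal_utility[OF sigma(1)]
        in \<open>force simp: DERIV_deriv_iff_real_differentiable\<close>)+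
  also have "\<dots> \<longleftrightarrow> (\<exists>K>0. \<forall>q\<in>J. deriv u q = K * ?m q)"
    by (rule proportional_iff_pos_factor) (use pos m_pos in auto)
  finally have rra_iff: "(\<forall>q\<in>J. - (q * deriv (deriv u) q) / deriv u q = (\<alpha> * q + \<beta>) / (\<alpha> * \<sigma> * q + 1))
      \<longleftrightarrow> (\<exists>K>0. \<forall>q\<in>J. deriv u q = K * ?m q)" .
  show ?thesis
    unfolding rra_iff using u'_iff
    by (simp add: lfrra_utility_def lfrra_marginal_utility_def mult.assoc)
qed

end
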